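(* Let $F$ be an infinite field and $n\ge2$. If $f,h\in\mathcal{B}_{(g_1,\dots,g_k)}$ satisfy $f\le_{\mathcal{B}_{(g_1,\dots,g_k)}}h$, then $h\in\langle\{f\}\cup I\rangle_{T_{\mathbb{Z}_n}}$.
   Context: $UT_n(F)^{(-)}$: $n\times n$ upper triangular matrices, bracket $[a,b]=ab-ba$, canonical $\mathbb{Z}_n$-grading (degree-$k$ component spanned by $e_{ij}$, $j-i=k$); $I$ is its $T_{\mathbb{Z}_n}$-ideal of graded identities in the free graded Lie algebra with variables $y_1,y_2,\dots$ of degree $0$ and countably many variables of each nonzero degree. Commutators are left normed. Fix distinct variables $z_1,\dots,z_k$ of degrees $g_1,\dots,g_k\in\{1,\dots,n-1\}$ with $\sum g_i\le n-1$. $\mathcal{B}_{(g_1,\dots,g_k)}$ is the set of commutators $[z_{\sigma(1)},a^{(1)}_1y_1,\dots,a^{(1)}_my_m,z_{\sigma(2)},a^{(2)}_1y_1,\dots,a^{(2)}_my_m,\dots,z_{\sigma(k)},a^{(k)}_1y_1,\dots,a^{(k)}_my_m]$ with $\sigma\in S_k$, $\sigma(1)=1$, $m\ge0$, $a^{(j)}_i\ge0$, where $a y$ means $y$ repeated $a$ times. For such $f$, $V_f=((a^{(1)}_1,\dots,a^{(k)}_1),\dots,(a^{(1)}_m,\dots,a^{(k)}_m))$, a finite sequence in $\mathbb{N}_0^k$. For finite sequences in $\mathbb{N}_0^k$, $(p_1,\dots,p_m)\le_k(q_1,\dots,q_r)$ iff there is a strictly increasing $\varphi:\{1,\dots,m\}\to\{1,\dots,r\}$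 with $p_i\le q_{\varphi(i)}$ componentwise. $f\le_{\mathcal{B}_{(g_1,\dots,g_k)}}h$ iff $f,h$ have the same permutation $\sigma$ and $V_f\le_kV_h$. *)

theory Defs
  imports "HOL-Combinatorics.Permutations"
begin

text \<open>Variables of the free graded Lie algebra: a variable is a pair (d, i);
its Z_n-degree is d mod n.  Hence there are countably many variables of every degree.\<close>

type_synonym gvar = "nat \<times> nat"

definition vdeg :: "nat \<Rightarrow> gvar \<Rightarrow> nat" where
  "vdeg n v = fst v mod n"

text \<open>Lie expressions (elements of the free Lie algebra are their values in the
free associative algebra, which contains the free Lie algebra as the Lie subalgebra
generated by the variables).\<close>

datatype 'f lexpr =
    LVar gvar
  | LAdd "'f lexpr" "'f lexpr"
  | LSmult 'f "'f lexpr"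
  | LBr "'f lexpr" "'f lexpr"

text \<open>Free associative algebra F<X>: coefficient functions on words.\<close>

type_synonym 'f npoly = "gvar list \<Rightarrow> 'f"

definition pmul :: "'f::field npoly \<Rightarrow> 'f npoly \<Rightarrow> 'f npoly" where
  "pmul p q = (\<lambda>w. \<Sum>i\<le>length w. p (take i w) * q (drop i w))"

definition pbr :: "'f::field npoly \<Rightarrow> 'f npoly \<Rightarrow> 'f npoly" where
  "pbr p q = (\<lambda>w. pmul p q w - pmul q p w)"

definition pvar :: "gvar \<Rightarrow> 'f::field npoly" where
  "pvar v = (\<lambda>w. if w = [v] then 1 else 0)"

fun leval :: "'f::field lexpr \<Rightarrow> 'f npoly" where
  "leval (LVar v) = pvar v"
| "leval (LAdd a b) = (\<lambda>w. leval a w + leval b w)"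
| "leval (LSmult c a) = (\<lambda>w. c * leval a w)"
| "leval (LBr a b) = pbr (leval a) (leval b)"

fun lsubst :: "(gvar \<Rightarrow> 'f lexpr) \<Rightarrow> 'f lexpr \<Rightarrow> 'f lexpr" where
  "lsubst s (LVar v) = s v"
| "lsubst s (LAdd a b) = LAdd (lsubst s a) (lsubst s b)"
| "lsubst s (LSmult c a) = LSmult c (lsubst s a)"
| "lsubst s (LBr a b) = LBr (lsubst s a) (lsubst s b)"

definition wdeg :: "nat \<Rightarrow> gvar list \<Rightarrow> nat" where
  "wdeg n w = (\<Sum>v\<leftarrow>w. fst v) mod n"

definition homogeneous :: "nat \<Rightarrow> nat \<Rightarrow> 'f::field npoly \<Rightarrow> bool" where
  "homogeneous n d p \<longleftrightarrow> (\<forall>w. p w \<noteq> 0 \<longrightarrow> wdeg n w = d)"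

definition graded_subst :: "nat \<Rightarrow> (gvar \<Rightarrow> 'f::field lexpr) \<Rightarrow> bool" where
  "graded_subst n s \<longleftrightarrow> (\<forall>v. homogeneous n (vdeg n v) (leval (s v)))"

text \<open>The T_{Z_n}-ideal generated by a set S of Lie expressions (as a subset of the
free Lie algebra, i.e. of values in F<X>).\<close>

inductive_set tideal :: "nat \<Rightarrow> 'f::field lexpr set \<Rightarrow> 'f npoly set"
  for n :: nat and S :: "'f lexpr set" where
  gen: "e \<in> S \<Longrightarrow> leval e \<in> tideal n S"
| zero: "(\<lambda>w. 0) \<in> tideal n S"
| add: "p \<in> tideal n S \<Longrightarrow> q \<in> tideal n S \<Longrightarrow> (\<lambda>w. p w + q w) \<in> tideal n S"
| smult: "p \<in> tideal n S \<Longrightarrow> (\<lambda>w. c * p w) \<in> tideal n S"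
| br: "p \<in> tideal n S \<Longrightarrow> pbr p (leval e) \<in> tideal n S"
| endo: "leval e \<in> tideal n S \<Longrightarrow> graded_subst n s \<Longrightarrow> leval (lsubst s e) \<in> tideal n S"

text \<open>UT_n(F)^(-) with its canonical Z_n-grading; matrices as functions on indices < n
(0-based).\<close>

type_synonym 'f mat = "nat \<Rightarrow> nat \<Rightarrow> 'f"

definition mmul :: "nat \<Rightarrow> 'f::field mat \<Rightarrow> 'f mat \<Rightarrow> 'f mat" where
  "mmul n A B = (\<lambda>i j. \<Sum>l<n. A i l * B l j)"

fun meval :: "nat \<Rightarrow> (gvar \<Rightarrow> 'f::field mat) \<Rightarrow> 'f lexpr \<Rightarrow> 'f mat" where
  "meval n \<psi> (LVar v) = \<psi> v"
| "meval n \<psi> (LAdd a b) = (\<lambda>i j. meval n \<psi> a i j + meval n \<psi> b i j)"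
| "meval n \<psi> (LSmult c a) = (\<lambda>i j. c * meval n \<psi> a i j)"
| "meval n \<psi> (LBr a b) =
     (\<lambda>i j. mmul n (meval n \<psi> a) (meval n \<psi> b) i j - mmul n (meval n \<psi> b) (meval n \<psi> a) i j)"

definition in_component :: "nat \<Rightarrow> nat \<Rightarrow> 'f::field mat \<Rightarrow> bool" where
  "in_component n d A \<longleftrightarrow> (\<forall>i j. A i j \<noteq> 0 \<longrightarrow> i < n \<and> j < n \<and> i \<le> j \<and> j - i = d)"

definition graded_eval :: "nat \<Rightarrow> (gvar \<Rightarrow> 'f::field mat) \<Rightarrow> bool" where
  "graded_eval n \<psi> \<longleftrightarrow> (\<forall>v. in_component n (vdeg n v) (\<psi> v))"

definition graded_identities :: "nat \<Rightarrow> 'f::field lexpr set" where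
  "graded_identities n =
     {e. \<forall>\<psi>. graded_eval n \<psi> \<longrightarrow> (\<forall>i<n. \<forall>j<n. meval n \<psi> e i j = 0)}"

fun lnormed :: "gvar list \<Rightarrow> 'f lexpr" where
  "lnormed [] = LVar (0, 0)"  \<comment> \<open>never used\<close>
| "lnormed (x # xs) = foldl (\<lambda>acc v. LBr acc (LVar v)) (LVar x) xs"

text \<open>The commutator of B_{(g_1..g_k)} determined by the permutation sigma (0-based,
sigma 0 = 0), the variables z 0, ..., z (k-1) and V = (v_1,...,v_m), v_i in N^k given as
lists of length k: the j-th block is z_sigma(j) followed by y_1^{v_1 ! j} ... y_m^{v_m ! j},
where y_i = (0, i).\<close>

definition yvar :: "nat \<Rightarrow> gvar" where
  "yvar i = (0, i)"

definition bword :: "nat \<Rightarrow> (nat \<Rightarrow> nat) \<Rightarrow> (nat \<Rightarrow> gvar) \<Rightarrow> nat list list \<Rightarrow> gvar list" where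
  "bword k \<sigma> z V =
     concat (map (\<lambda>j. z (\<sigma> j) #
        concat (map (\<lambda>i. replicate (V ! i ! j) (yvar (Suc i))) [0..<length V])) [0..<k])"

definition bcomm :: "nat \<Rightarrow> (nat \<Rightarrow> nat) \<Rightarrow> (nat \<Rightarrow> gvar) \<Rightarrow> nat list list \<Rightarrow> 'f lexpr" where
  "bcomm k \<sigma> z V = lnormed (bword k \<sigma> z V)"

definition seq_le :: "nat list list \<Rightarrow> nat list list \<Rightarrow> bool" where
  "seq_le P Q \<longleftrightarrow> (\<exists>\<phi>. strict_mono_on {..<length P} \<phi> \<and>
      (\<forall>i<length P. \<phi> i < length Q \<and> list_all2 (\<le>) (P ! i) (Q ! \<phi> i)))"

end

theory Submission
  imports Defs
begin

text \<open>Under a graded evaluation the degree-zero variables are diagonal matrices, so they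
commute with each other inside a left normed commutator modulo the graded identities.
The substitution \<open>y\<^sub>i \<mapsto> y\<^sub>\<phi>\<^sub>(\<^sub>i\<^sub>)\<close> along the embedding \<open>\<phi>\<close> witnessing \<open>V \<le>\<^sub>k W\<close> turns \<open>f\<close> into
a commutator with the same blocks as \<open>h\<close> but possibly fewer \<open>y\<close>'s in each block.  A missing \<open>y\<close>
is inserted right after the head \<open>z\<close> of its block: the substitution \<open>z \<mapsto> [z, y]\<close> and the
Jacobi identity \<open>[U, [z, y]] = [[U, z], y] - [[U, y], z]\<close> reduce this to inserting \<open>y\<close> into
the preceding block, so induction over the blocks concludes.\<close>

definition mbracket :: "nat \<Rightarrow> 'f::field mat \<Rightarrow> 'f mat \<Rightarrow> 'f mat" where
  "mbracket n A B = (\<lambda>i j. mmul n A B i j - mmul n B A i j)"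

declare meval.simps(4)[simp del]

lemma meval_LBr [simp]:
  "meval n \<psi> (LBr a b) = mbracket n (meval n \<psi> a) (meval n \<psi> b)"
  by (simp add: mbracket_def meval.simps(4))

definition mbrackets :: "nat \<Rightarrow> (gvar \<Rightarrow> 'f::field mat) \<Rightarrow> 'f mat \<Rightarrow> gvar list \<Rightarrow> 'f mat" where
  "mbrackets n \<psi> A xs = foldl (\<lambda>M v. mbracket n M (\<psi> v)) A xs"

lemma mbrackets_Nil [simp]: "mbrackets n \<psi> A [] = A"
  and mbrackets_Cons [simp]: "mbrackets n \<psi> A (x # xs) = mbrackets n \<psi> (mbracket n A (\<psi> x)) xs"
  and mbrackets_append [simp]: "mbrackets n \<psi> A (xs @ ys) = mbrackets n \<psi> (mbrackets n \<psi> A xs) ys"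
  by (simp_all add: mbrackets_def)

lemma mbrackets_cong: "\<forall>v\<in>set xs. \<psi>' v = \<psi> v \<Longrightarrow> mbrackets n \<psi>' A xs = mbrackets n \<psi> A xs"
  by (induction xs arbitrary: A) simp_all

lemma meval_foldl_LBr:
  "meval n \<psi> (foldl (\<lambda>acc v. LBr acc (LVar v)) e xs) = mbrackets n \<psi> (meval n \<psi> e) xs"
  by (induction xs arbitrary: e) simp_all

lemma meval_lnormed_Cons: "meval n \<psi> (lnormed (x # xs)) = mbrackets n \<psi> (\<psi> x) xs"
  by (simp add: meval_foldl_LBr)

lemma meval_lnormed_append:
  "u \<noteq> [] \<Longrightarrow> meval n \<psi> (lnormed (u @ w)) = mbrackets n \<psi> (meval n \<psi> (lnormed u)) w"
  by (cases u) (simp_all add: meval_foldl_LBr)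

lemma meval_lnormed_cong:
  "u \<noteq> [] \<Longrightarrow> \<forall>v\<in>set u. \<psi>' v = \<psi> v \<Longrightarrow> meval n \<psi>' (lnormed u) = meval n \<psi> (lnormed u)"
  by (cases u) (simp_all add: meval_foldl_LBr mbrackets_cong)

declare lnormed.simps(2)[simp del]

lemma mmul_diff_left: "mmul n (\<lambda>i j. A i j - B i j) C = (\<lambda>i j. mmul n A C i j - mmul n B C i j)"
  by (simp add: mmul_def left_diff_distrib sum_subtractf)

lemma mmul_diff_right: "mmul n C (\<lambda>i j. A i j - B i j) = (\<lambda>i j. mmul n C A i j - mmul n C B i j)"
  by (simp add: mmul_def right_diff_distrib sum_subtractf)

lemma mmul_assoc: "mmul n (mmul n A B) C = mmul n A (mmul n B C)"
  unfolding mmul_def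
  by (auto simp: sum_distrib_left sum_distrib_right mult.assoc intro!: ext sum.swap)

lemma mbracket_diff_left:
  "mbracket n (\<lambda>i j. A i j - B i j) C = (\<lambda>i j. mbracket n A C i j - mbracket n B C i j)"
  by (simp add: mbracket_def mmul_diff_left mmul_diff_right algebra_simps)

lemma mbrackets_diff:
  "mbrackets n \<psi> (\<lambda>i j. A i j - B i j) xs = (\<lambda>i j. mbrackets n \<psi> A xs i j - mbrackets n \<psi> B xs i j)"
  by (induction xs arbitrary: A B) (simp_all add: mbracket_diff_left)

lemma mbracket_jacobi:
  "mbracket n P (mbracket n X Y) =
     (\<lambda>i j. mbracket n (mbracket n P X) Y i j - mbracket n (mbracket n P Y) X i j)"
  unfolding mbracket_def mmul_diff_left mmul_diff_right mmul_assoc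
  by (auto simp: algebra_simps intro!: ext)

lemma in_component_0_nonzero: "in_component n 0 D \<Longrightarrow> D i j \<noteq> 0 \<Longrightarrow> i = j \<and> j < n"
  unfolding in_component_def by (metis diff_is_0_eq le_antisym)

lemma mmul_diagonal_right:
  assumes "in_component n 0 D"
  shows "mmul n A D = (\<lambda>i j. A i j * D j j)"
proof (intro ext)
  fix i j
  have "mmul n A D i j = (\<Sum>l<n. if l = j then A i j * D j j else 0)"
    unfolding mmul_def by (rule sum.cong) (use in_component_0_nonzero[OF assms] in auto)
  then show "mmul n A D i j = A i j * D j j"
    using in_component_0_nonzero[OF assms, of j j] by auto
qed

lemma mmul_diagonal_left:
  assumes "in_component n 0 D"
  shows "mmul n D A = (\<lambda>i j. D i i * A i j)"
proof (intro ext)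
  fix i j
  have "mmul n D A i j = (\<Sum>l<n. if l = i then D i i * A i j else 0)"
    unfolding mmul_def by (rule sum.cong) (use in_component_0_nonzero[OF assms] in auto)
  then show "mmul n D A i j = D i i * A i j"
    using in_component_0_nonzero[OF assms, of i i] by auto
qed

lemma mbrackets_diagonal:
  "\<forall>y\<in>set ys. in_component n 0 (\<psi> y) \<Longrightarrow>
     mbrackets n \<psi> A ys = (\<lambda>i j. A i j * (\<Prod>y\<leftarrow>ys. \<psi> y j j - \<psi> y i i))"
  by (induction ys arbitrary: A)
     (simp_all add: mbracket_def mmul_diagonal_left mmul_diagonal_right algebra_simps)

lemma mbrackets_perm:
  fixes \<psi> :: "gvar \<Rightarrow> 'f::field mat"
  assumes "\<forall>y\<in>set ys. in_component n 0 (\<psi> y)" and "mset ys = mset ys'"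
  shows "mbrackets n \<psi> A ys = mbrackets n \<psi> A ys'"
proof -
  have "(\<Prod>y\<leftarrow>ys. f y) = (\<Prod>y\<leftarrow>ys'. f y)" for f :: "gvar \<Rightarrow> 'f"
    using assms(2) by (metis mset_map prod_mset_prod_list)
  moreover have "set ys' = set ys"
    using assms(2) by (metis mset_eq_setD)
  ultimately show ?thesis
    using assms(1) by (simp add: mbrackets_diagonal)
qed

lemma graded_eval_degree_zero: "graded_eval n \<psi> \<Longrightarrow> fst y = 0 \<Longrightarrow> in_component n 0 (\<psi> y)"
  by (metis graded_eval_def mod_0 vdeg_def)

lemma meval_lsubst: "meval n \<psi> (lsubst s e) = meval n (\<lambda>v. meval n \<psi> (s v)) e"
  by (induction e) simp_all

text \<open>The difference \<open>c - (a + b)\<close> is a graded identity.\<close>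

lemma tideal_add_modulo_identities:
  assumes "leval a \<in> tideal n S" and "leval b \<in> tideal n S" and "graded_identities n \<subseteq> S"
    and "\<forall>\<psi>. graded_eval n \<psi> \<longrightarrow>
           (\<forall>i<n. \<forall>j<n. meval n \<psi> c i j = meval n \<psi> a i j + meval n \<psi> b i j)"
  shows "leval c \<in> tideal n S"
proof -
  let ?d = "LAdd c (LSmult (-1) (LAdd a b))"
  have "?d \<in> S"
    using assms(3,4) by (auto simp: graded_identities_def)
  then have "leval ?d \<in> tideal n S"
    by (rule tideal.gen)
  moreover have "leval (LAdd a b) \<in> tideal n S"
    using tideal.add[OF assms(1,2)] by simp
  ultimately have "(\<lambda>w. leval (LAdd a b) w + leval ?d w) \<in> tideal n S"
    by (rule tideal.add[rotated])
  moreover have "(\<lambda>w. leval (LAdd a b) w + leval ?d w) = leval c"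
    by (rule ext) simp
  ultimately show ?thesis
    by simp
qed

lemma tideal_modulo_identities:
  assumes "leval a \<in> tideal n S" and "graded_identities n \<subseteq> S"
    and "\<forall>\<psi>. graded_eval n \<psi> \<longrightarrow> (\<forall>i<n. \<forall>j<n. meval n \<psi> c i j = meval n \<psi> a i j)"
  shows "leval c \<in> tideal n S"
proof -
  have "leval (LSmult 0 a) \<in> tideal n S"
    using tideal.smult[OF assms(1), of 0] by simp
  then show ?thesis
    using tideal_add_modulo_identities[OF assms(1) _ assms(2), of "LSmult 0 a" c] assms(3) by simp
qed

lemma pmul_pvar_nonzero:
  assumes "pmul (pvar a) (pvar b) w \<noteq> (0::'f::field)"
  shows "w = [a, b]"
proof -
  from assms obtain i where "pvar a (take i w) * (pvar b (drop i w) :: 'f) \<noteq> 0"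
    unfolding pmul_def by (meson sum.not_neutral_contains_not_neutral)
  then have "take i w = [a]" and "drop i w = [b]"
    unfolding pvar_def by (auto split: if_splits)
  then show ?thesis
    by (metis append_Cons append_Nil append_take_drop_id)
qed

lemma homogeneous_pvar: "homogeneous n (vdeg n v) (pvar v :: 'f::field npoly)"
  by (simp add: homogeneous_def pvar_def wdeg_def vdeg_def)

lemma homogeneous_pbr_pvar:
  assumes "fst y = 0"
  shows "homogeneous n (vdeg n x) (pbr (pvar x) (pvar y) :: 'f::field npoly)"
  unfolding homogeneous_def
proof (intro allI impI)
  fix w
  assume "pbr (pvar x) (pvar y) w \<noteq> (0::'f)"
  then have "w = [x, y] \<or> w = [y, x]"
    unfolding pbr_def by (metis diff_self pmul_pvar_nonzero)
  then show "wdeg n w = vdeg n x"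
    using assms by (auto simp: wdeg_def vdeg_def)
qed

lemma graded_subst_rename: "\<forall>v. fst (r v) = fst v \<Longrightarrow> graded_subst n (\<lambda>v. LVar (r v) :: 'f::field lexpr)"
  unfolding graded_subst_def using homogeneous_pvar by (metis leval.simps(1) vdeg_def)

lemma graded_subst_bracket_degree_zero:
  "fst y = 0 \<Longrightarrow>
     graded_subst n (\<lambda>v. if v = x then LBr (LVar x) (LVar y) else LVar v :: 'f::field lexpr)"
  unfolding graded_subst_def by (simp add: homogeneous_pvar homogeneous_pbr_pvar)

lemma lsubst_rename_lnormed:
  assumes "xs \<noteq> []"
  shows "lsubst (\<lambda>v. LVar (r v)) (lnormed xs) = lnormed (map r xs)"
proof -
  have foldl: "lsubst (\<lambda>v. LVar (r v)) (foldl (\<lambda>acc v. LBr acc (LVar v)) e ys)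
      = foldl (\<lambda>acc v. LBr acc (LVar v)) (lsubst (\<lambda>v. LVar (r v)) e) (map r ys)" for e ys
    by (induction ys arbitrary: e) simp_all
  obtain x xs' where "xs = x # xs'"
    using assms by (cases xs) auto
  then show ?thesis
    using foldl[of "LVar x" xs'] by (simp add: lnormed.simps(2))
qed

text \<open>The Jacobi identity \<open>[W, x, y] = [W, [x, y]] + [W, y, x]\<close>, where \<open>[W, [x, y]]\<close> is obtained from
\<open>[W, x]\<close> by the graded substitution \<open>x \<mapsto> [x, y]\<close> as \<open>x\<close> occurs nowhere else.\<close>

lemma meval_lnormed_jacobi:
  assumes "w \<noteq> []" and "x \<notin> set w" and "x \<notin> set v"
  shows "meval n \<psi> (lnormed (w @ x # y # v)) =
    (\<lambda>i j. meval n \<psi> (lsubst (\<lambda>v. if v = x then LBr (LVar x) (LVar y) else LVar v) (lnormed (w @ x # v))) i j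
      + meval n \<psi> (lnormed (w @ y # x # v)) i j)"
proof -
  let ?s = "\<lambda>v. if v = x then LBr (LVar x) (LVar y) else LVar v"
  let ?\<psi>' = "\<lambda>v. meval n \<psi> (?s v)"
  let ?W = "meval n \<psi> (lnormed w)"
  have "meval n ?\<psi>' (lnormed w) = ?W"
    by (rule meval_lnormed_cong[OF assms(1)]) (use assms(2) in auto)
  moreover have "mbrackets n ?\<psi>' A v = mbrackets n \<psi> A v" for A
    by (rule mbrackets_cong) (use assms(3) in auto)
  ultimately have "meval n \<psi> (lsubst ?s (lnormed (w @ x # v)))
      = mbrackets n \<psi> (mbracket n ?W (?\<psi>' x)) v"
    by (simp only: meval_lsubst meval_lnormed_append[OF assms(1)] mbrackets_Cons)
  also have "?\<psi>' x = mbracket n (\<psi> x) (\<psi> y)"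
    by simp
  finally show ?thesis
    by (simp add: meval_lnormed_append[OF assms(1)] mbracket_jacobi mbrackets_diff)
qed

lemma tideal_lnormed_perm:
  assumes "leval (lnormed (u @ ys @ v)) \<in> tideal n S" and "graded_identities n \<subseteq> S"
    and "u \<noteq> []" and "mset ys = mset ys'" and "\<forall>y\<in>set ys. fst y = 0"
  shows "leval (lnormed (u @ ys' @ v)) \<in> tideal n S"
proof (rule tideal_modulo_identities[OF assms(1,2)], rule allI, rule impI)
  fix \<psi>
  assume "graded_eval n \<psi>"
  then have "mbrackets n \<psi> A ys' = mbrackets n \<psi> A ys" for A
    using assms(4,5) graded_eval_degree_zero by (metis mbrackets_perm)
  then show "\<forall>i<n. \<forall>j<n. meval n \<psi> (lnormed (u @ ys' @ v)) i j = meval n \<psi> (lnormed (u @ ys @ v)) i j"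
    using assms(3) by (simp add: meval_lnormed_append)
qed

text \<open>A commutator of \<open>\<B>\<close> is the left normed commutator of a list of blocks \<open>(z, ys)\<close>, each a
variable \<open>z\<close> of nonzero degree followed by degree-zero variables \<open>ys\<close>.\<close>

definition block_word :: "(gvar \<times> gvar list) list \<Rightarrow> gvar list" where
  "block_word Bs = concat (map (\<lambda>(x, ys). x # ys) Bs)"

lemma block_word_simps [simp]:
  "block_word [] = []"
  "block_word ((x, ys) # Bs) = x # ys @ block_word Bs"
  "block_word (Bs @ Cs) = block_word Bs @ block_word Cs"
  by (simp_all add: block_word_def)

definition admissible_blocks :: "(gvar \<times> gvar list) list \<Rightarrow> bool" where
  "admissible_blocks Bs \<longleftrightarrow>
     distinct (map fst Bs) \<and> (\<forall>b\<in>set Bs. fst (fst b) \<noteq> 0 \<and> (\<forall>y\<in>set (snd b). fst y = 0))"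

lemma admissible_blocks_replace:
  "admissible_blocks (pre @ (x, ys) # post) \<Longrightarrow> \<forall>y\<in>set ys'. fst y = 0 \<Longrightarrow>
     admissible_blocks (pre @ (x, ys') # post)"
  by (auto simp: admissible_blocks_def)

lemma set_block_word: "set (block_word Bs) = fst ` set Bs \<union> (\<Union>b\<in>set Bs. set (snd b))"
  by (induction Bs) auto

lemma admissible_blocks_head_notin:
  assumes "admissible_blocks (pre @ (x, ys) # post)"
  shows "x \<notin> set (block_word pre)" and "x \<notin> set ys" and "x \<notin> set (block_word post)"
proof -
  have "fst x \<noteq> 0" and "x \<notin> fst ` set pre" and "x \<notin> fst ` set post"
    and "\<forall>b\<in>set (pre @ (x, ys) # post). \<forall>y\<in>set (snd b). fst y = 0"
    using assms by (auto simp: admissible_blocks_def)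
  then show "x \<notin> set (block_word pre)" and "x \<notin> set ys" and "x \<notin> set (block_word post)"
    unfolding set_block_word by fastforce+
qed

lemma tideal_block_insert:
  assumes S: "graded_identities n \<subseteq> S" and y: "fst y = 0"
  shows "admissible_blocks (pre @ (x, ys) # post) \<Longrightarrow>
    leval (lnormed (block_word (pre @ (x, ys) # post))) \<in> tideal n S \<Longrightarrow>
    leval (lnormed (block_word (pre @ (x, y # ys) # post))) \<in> tideal n S"
proof (induction pre arbitrary: x ys post rule: rev_induct)
  case Nil
  let ?s = "\<lambda>v. if v = x then LBr (LVar x) (LVar y) else LVar v"
  have subst: "leval (lsubst ?s (lnormed (x # ys @ block_word post))) \<in> tideal n S"
    using tideal.endo[OF _ graded_subst_bracket_degree_zero[OF y]] Nil.prems(2) by simp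
  have "x \<notin> set (ys @ block_word post)"
    using admissible_blocks_head_notin[of "[]"] Nil.prems(1) by simp
  then have "mbrackets n (\<lambda>v. meval n \<psi> (?s v)) A (ys @ block_word post)
      = mbrackets n \<psi> A (ys @ block_word post)" for \<psi> :: "gvar \<Rightarrow> 'a mat" and A
    by (intro mbrackets_cong) auto
  then show ?case
    by (intro tideal_modulo_identities[OF subst S] allI impI)
       (simp add: meval_lsubst meval_lnormed_Cons del: mbrackets_append)
next
  case (snoc p pre)
  obtain x' ys' where p: "p = (x', ys')"
    by (cases p)
  define w where "w = block_word pre @ x' # ys'"
  define v where "v = ys @ block_word post"
  have ih: "leval (lnormed ((block_word pre @ [x']) @ (y # ys') @ x # v)) \<in> tideal n S"
    using snoc.IH[of x' ys' "(x, ys) # post"] snoc.prems by (simp add: p v_def)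
  have "leval (lnormed ((block_word pre @ [x']) @ (ys' @ [y]) @ x # v)) \<in> tideal n S"
    by (rule tideal_lnormed_perm[OF ih S]) (use snoc.prems(1) y in \<open>auto simp: admissible_blocks_def p\<close>)
  then have moved: "leval (lnormed (w @ y # x # v)) \<in> tideal n S"
    by (simp add: w_def)
  have subst: "leval (lsubst (\<lambda>v. if v = x then LBr (LVar x) (LVar y) else LVar v)
      (lnormed (w @ x # v))) \<in> tideal n S"
    using tideal.endo[OF snoc.prems(2) graded_subst_bracket_degree_zero[OF y]]
    by (simp add: p w_def v_def)
  have "w \<noteq> []" and "x \<notin> set w" and "x \<notin> set v"
    using admissible_blocks_head_notin[OF snoc.prems(1)] snoc.prems(1)
    by (auto simp: w_def v_def p admissible_blocks_def)
  note jacobi = meval_lnormed_jacobi[OF this]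
  have "leval (lnormed (w @ x # y # v)) \<in> tideal n S"
    by (intro tideal_add_modulo_identities[OF subst moved S] allI impI) (simp add: jacobi)
  then show ?case
    by (simp add: p w_def v_def)
qed

lemma tideal_block_prepend:
  assumes "graded_identities n \<subseteq> S" and "\<forall>y\<in>set zs. fst y = 0"
    and "admissible_blocks (pre @ (x, ys) # post)"
    and "leval (lnormed (block_word (pre @ (x, ys) # post))) \<in> tideal n S"
  shows "leval (lnormed (block_word (pre @ (x, zs @ ys) # post))) \<in> tideal n S"
  using assms(2-)
proof (induction zs)
  case (Cons y zs)
  then have "admissible_blocks (pre @ (x, zs @ ys) # post)"
    by (auto intro: admissible_blocks_replace simp: admissible_blocks_def)
  moreover have "leval (lnormed (block_word (pre @ (x, zs @ ys) # post))) \<in> tideal n S"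
    using Cons by simp
  ultimately show ?case
    using tideal_block_insert[OF assms(1), of y pre x "zs @ ys" post] Cons.prems(1) by simp
qed simp

lemma tideal_block_grow:
  assumes S: "graded_identities n \<subseteq> S" and "admissible_blocks (pre @ (x, ys) # post)"
    and "leval (lnormed (block_word (pre @ (x, ys) # post))) \<in> tideal n S"
    and "mset ys \<subseteq># mset ys'" and "\<forall>y\<in>set ys'. fst y = 0"
  shows "leval (lnormed (block_word (pre @ (x, ys') # post))) \<in> tideal n S"
proof -
  obtain zs where zs: "mset ys' = mset (zs @ ys)"
    using assms(4) by (metis mset_append mset_subset_eq_exists_conv ex_mset add.commute)
  then have set_eq: "set (zs @ ys) = set ys'"
    by (metis mset_eq_setD)
  then have "\<forall>y\<in>set zs. fst y = 0"
    using assms(5) by auto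
  then have "leval (lnormed ((block_word pre @ [x]) @ (zs @ ys) @ block_word post)) \<in> tideal n S"
    using tideal_block_prepend[OF S _ assms(2,3)] by simp
  then have "leval (lnormed ((block_word pre @ [x]) @ ys' @ block_word post)) \<in> tideal n S"
    by (rule tideal_lnormed_perm[OF _ S]) (use zs set_eq assms(5) in auto)
  then show ?thesis
    by simp
qed

definition subblock :: "gvar \<times> gvar list \<Rightarrow> gvar \<times> gvar list \<Rightarrow> bool" where
  "subblock b c \<longleftrightarrow> fst b = fst c \<and> mset (snd b) \<subseteq># mset (snd c) \<and> (\<forall>y\<in>set (snd c). fst y = 0)"

lemma tideal_blocks_grow:
  assumes S: "graded_identities n \<subseteq> S"
  shows "list_all2 subblock Bs Cs \<Longrightarrow>
    admissible_blocks (pre @ Bs) \<Longrightarrow> leval (lnormed (block_word (pre @ Bs))) \<in> tideal n S \<Longrightarrow>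
    leval (lnormed (block_word (pre @ Cs))) \<in> tideal n S"
proof (induction arbitrary: pre rule: list_all2_induct)
  case (Cons b Bs c Cs)
  obtain x ys ys' where bc: "b = (x, ys)" "c = (x, ys')" "mset ys \<subseteq># mset ys'" "\<forall>y\<in>set ys'. fst y = 0"
    using Cons.hyps(1) by (cases b, cases c) (auto simp: subblock_def)
  have "leval (lnormed (block_word (pre @ (x, ys') # Bs))) \<in> tideal n S"
    using tideal_block_grow[OF S] Cons.prems bc by simp
  moreover have "admissible_blocks (pre @ (x, ys') # Bs)"
    using Cons.prems(1) bc admissible_blocks_replace by simp
  ultimately show ?case
    using Cons.IH[of "pre @ [c]"] bc by simp
qed simp

lemma tideal_blocks_rename:
  assumes "leval (lnormed (block_word Bs)) \<in> tideal n S" and "Bs \<noteq> []" and "\<forall>v. fst (r v) = fst v"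
  shows "leval (lnormed (block_word (map (\<lambda>(x, ys). (r x, map r ys)) Bs))) \<in> tideal n S"
proof -
  have "map r (block_word Bs) = block_word (map (\<lambda>(x, ys). (r x, map r ys)) Bs)"
    by (induction Bs) auto
  moreover have "block_word Bs \<noteq> []"
    using assms(2) by (cases Bs) auto
  ultimately show ?thesis
    using tideal.endo[OF assms(1) graded_subst_rename[OF assms(3)]] by (simp add: lsubst_rename_lnormed)
qed

definition ytail :: "nat list list \<Rightarrow> nat \<Rightarrow> gvar list" where
  "ytail X j = concat (map (\<lambda>i. replicate (X ! i ! j) (yvar (Suc i))) [0..<length X])"

definition comm_blocks :: "nat \<Rightarrow> (nat \<Rightarrow> gvar) \<Rightarrow> nat list list \<Rightarrow> (gvar \<times> gvar list) list" where
  "comm_blocks k h X = map (\<lambda>j. (h j, ytail X j)) [0..<k]"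

lemma bword_eq_block_word: "bword k \<sigma> z X = block_word (comm_blocks k (z \<circ> \<sigma>) X)"
  by (simp add: bword_def block_word_def comm_blocks_def ytail_def o_def)

lemma ytail_degree_zero: "\<forall>y\<in>set (ytail X j). fst y = 0"
  by (auto simp: ytail_def yvar_def)

lemma count_mset_replicates:
  "count (mset (concat (map (\<lambda>i. replicate (c i) (x i)) [0..<m]))) a = (\<Sum>i<m. if a = x i then c i else 0)"
  by (induction m) (simp_all add: mset_replicate)

text \<open>The substitution \<open>y\<^sub>i\<^sub>+\<^sub>1 \<mapsto> y\<^sub>\<phi>\<^sub>(\<^sub>i\<^sub>)\<^sub>+\<^sub>1\<close>: exponent sequences are indexed from \<open>0\<close>, the
variables \<open>y\<^sub>1, y\<^sub>2, \<dots>\<close> from \<open>1\<close>.\<close>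

definition reindex_y :: "(nat \<Rightarrow> nat) \<Rightarrow> gvar \<Rightarrow> gvar" where
  "reindex_y \<phi> v = (if fst v = 0 \<and> 0 < snd v then yvar (Suc (\<phi> (snd v - 1))) else v)"

lemma fst_reindex_y [simp]: "fst (reindex_y \<phi> v) = fst v"
  by (simp add: reindex_y_def yvar_def)

lemma reindex_y_nonzero_degree: "fst v \<noteq> 0 \<Longrightarrow> reindex_y \<phi> v = v"
  by (simp add: reindex_y_def)

lemma mset_reindex_ytail_subseteq:
  assumes "strict_mono_on {..<length V} \<phi>"
    and "\<forall>i<length V. \<phi> i < length W \<and> V ! i ! j \<le> W ! \<phi> i ! j"
  shows "mset (map (reindex_y \<phi>) (ytail V j)) \<subseteq># mset (ytail W j)"
  unfolding subseteq_mset_def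
proof
  fix a
  let ?m = "length V"
  have reindexed: "map (reindex_y \<phi>) (ytail V j) = concat (map (\<lambda>i. replicate (V ! i ! j) (yvar (Suc (\<phi> i)))) [0..<?m])"
    by (auto simp: ytail_def map_concat reindex_y_def yvar_def o_def intro!: arg_cong[where f=concat])
  have inj: "inj_on \<phi> {..<?m}"
    using assms(1) strict_mono_on_imp_inj_on by blast
  have "count (mset (map (reindex_y \<phi>) (ytail V j))) a = (\<Sum>i<?m. if a = yvar (Suc (\<phi> i)) then V ! i ! j else 0)"
    unfolding reindexed count_mset_replicates ..
  also have "\<dots> \<le> (\<Sum>i<?m. if a = yvar (Suc (\<phi> i)) then W ! \<phi> i ! j else 0)"
    by (rule sum_mono) (simp add: assms(2))
  also have "\<dots> = (\<Sum>t\<in>\<phi> ` {..<?m}. if a = yvar (Suc t) then W ! t ! j else 0)"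
    by (simp add: sum.reindex[OF inj])
  also have "\<dots> \<le> (\<Sum>t<length W. if a = yvar (Suc t) then W ! t ! j else 0)"
    by (rule sum_mono2) (use assms(2) in auto)
  also have "\<dots> = count (mset (ytail W j)) a"
    unfolding ytail_def count_mset_replicates ..
  finally show "count (mset (map (reindex_y \<phi>) (ytail V j))) a \<le> count (mset (ytail W j)) a" .
qed

lemma tideal_comm_blocks_seq_le:
  assumes S: "graded_identities n \<subseteq> S" and "k \<ge> 1"
    and heads: "inj_on h {..<k}" "\<forall>j<k. fst (h j) \<noteq> 0"
    and "\<forall>v\<in>set V. length v = k" and "seq_le V W"
    and "leval (lnormed (block_word (comm_blocks k h V))) \<in> tideal n S"
  shows "leval (lnormed (block_word (comm_blocks k h W))) \<in> tideal n S"
proof -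
  obtain \<phi> where \<phi>: "strict_mono_on {..<length V} \<phi>"
    "\<forall>i<length V. \<phi> i < length W \<and> list_all2 (\<le>) (V ! i) (W ! \<phi> i)"
    using assms(6) unfolding seq_le_def by blast
  let ?renamed = "map (\<lambda>j. (h j, map (reindex_y \<phi>) (ytail V j))) [0..<k]"
  have "leval (lnormed (block_word (map (\<lambda>(x, ys). (reindex_y \<phi> x, map (reindex_y \<phi>) ys))
      (comm_blocks k h V)))) \<in> tideal n S"
    by (rule tideal_blocks_rename[OF assms(7)]) (use assms(2) in \<open>simp_all add: comm_blocks_def\<close>)
  moreover have "map (\<lambda>(x, ys). (reindex_y \<phi> x, map (reindex_y \<phi>) ys)) (comm_blocks k h V) = ?renamed"
    using heads(2) by (simp add: comm_blocks_def reindex_y_nonzero_degree)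
  ultimately have renamed: "leval (lnormed (block_word ?renamed)) \<in> tideal n S"
    by simp
  have "admissible_blocks ?renamed"
    using heads ytail_degree_zero
    by (simp add: admissible_blocks_def distinct_map inj_on_def lessThan_atLeast0[symmetric])
  moreover have "list_all2 subblock ?renamed (comm_blocks k h W)"
  proof -
    have "mset (map (reindex_y \<phi>) (ytail V j)) \<subseteq># mset (ytail W j)" if "j < k" for j
      using \<phi> assms(5) that by (intro mset_reindex_ytail_subseteq) (auto simp: list_all2_conv_all_nth)
    then show ?thesis
      using ytail_degree_zero by (simp add: subblock_def comm_blocks_def list_all2_conv_all_nth)
  qed
  ultimately show ?thesis
    using tideal_blocks_grow[OF S, where pre="[]"] renamed by simp
qed

theorem mainTheorem13:
  fixes n k :: nat and g :: "nat \<Rightarrow> nat" and z :: "nat \<Rightarrow> gvar"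
    and \<sigma> :: "nat \<Rightarrow> nat" and V W :: "nat list list"
  assumes "infinite (UNIV :: 'f::field set)"
    and "n \<ge> 2"
    and "k \<ge> 1"
    and "\<forall>j<k. 1 \<le> g j \<and> g j \<le> n - 1"
    and "(\<Sum>j<k. g j) \<le> n - 1"
    and "inj_on z {..<k}"
    and "\<forall>j<k. vdeg n (z j) = g j"
    and "\<sigma> permutes {..<k}" and "\<sigma> 0 = 0"
    and "\<forall>v\<in>set V. length v = k" and "\<forall>v\<in>set W. length v = k"
    and "seq_le V W"
  shows "leval (bcomm k \<sigma> z W :: 'f lexpr)
           \<in> tideal n ({bcomm k \<sigma> z V} \<union> graded_identities n)"
proof -
  have "\<sigma> j < k" if "j < k" for j
    using permutes_in_image[OF assms(8)] that by simp
  then have heads_degree: "\<forall>j<k. fst ((z \<circ> \<sigma>) j) \<noteq> 0"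
    using assms(4,7) by (metis comp_apply mod_0 not_one_le_zero vdeg_def)
  have heads_inj: "inj_on (z \<circ> \<sigma>) {..<k}"
    using comp_inj_on[OF permutes_inj_on[OF assms(8)], of z] assms(6) permutes_image[OF assms(8)] by simp
  have "leval (lnormed (block_word (comm_blocks k (z \<circ> \<sigma>) V)) :: 'f lexpr)
      \<in> tideal n ({bcomm k \<sigma> z V} \<union> graded_identities n)"
    by (rule tideal.gen) (simp add: bcomm_def bword_eq_block_word)
  from tideal_comm_blocks_seq_le[OF Un_upper2 assms(3) heads_inj heads_degree assms(10,12) this]
  show ?thesis
    by (simp add: bcomm_def bword_eq_block_word)
qed

end
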